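(* Let $r,R>0$, $N\in\mathbb{N}$, $d\ge N$, and define $f_{N,r}:B_R(0)\to\mathbb{R}$ by $f_{N,r}(x)=\max_{i\in[N]}\{x_i-4r\cdot i\}$. Then: (1) $f_{N,r}$ is an $r$-robust zero-chain; (2) for every $x\in B_R(0)$ with $i_r^+(x)\le N$, $f_{N,r}(x)-\inf_{z\in B_R(0)}f_{N,r}(z)\ge\frac{R}{\sqrt N}-4Nr$; (3) $f_{N,r}$ is convex and $1$-Lipschitz (in the Euclidean norm).
   Context: All norms are Euclidean and $B_\rho(\bar x)=\{x\in\mathbb{R}^d:\|x-\bar x\|_2\le\rho\}$. For $x\in\mathbb{R}^d$, $i_r^+(x)=\min\{i\in[d]: |x_j|\le r\text{ for all }j\ge i\}$, with $i_r^+(x)=d+1$ if $|x_d|>r$. A function $f:B_R(0)\to\mathbb{R}$ is an $r$-robust zero-chain if for every $\bar x\in\mathbb{R}^d$ and every $x\in B_r(\bar x)\cap B_R(0)$, $f(x)=f(x_1,\ldots,x_{i_r^+(\bar x)},0,\ldots,0)$ (interpreted as $f(x)$ when $i_r^+(\bar x)=d+1$). *)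

theory Defs
  imports Complex_Main
begin

text \<open>Vectors of R^d are represented as functions nat => real supported on {1..d}
  (coordinates x 1, ..., x d).\<close>

definition Rd :: "nat \<Rightarrow> (nat \<Rightarrow> real) set" where
  "Rd d = {x. \<forall>i. i \<notin> {1..d} \<longrightarrow> x i = 0}"

definition enorm :: "nat \<Rightarrow> (nat \<Rightarrow> real) \<Rightarrow> real" where
  "enorm d x = sqrt (\<Sum>i=1..d. (x i)\<^sup>2)"

definition Bd :: "nat \<Rightarrow> (nat \<Rightarrow> real) \<Rightarrow> real \<Rightarrow> (nat \<Rightarrow> real) set" where
  "Bd d c \<rho> = {x \<in> Rd d. enorm d (\<lambda>i. x i - c i) \<le> \<rho>}"

definition iplus :: "nat \<Rightarrow> real \<Rightarrow> (nat \<Rightarrow> real) \<Rightarrow> nat" where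
  "iplus d r x = (LEAST i. i \<in> {1..d+1} \<and> (\<forall>j\<in>{i..d}. \<bar>x j\<bar> \<le> r))"

definition trunc :: "nat \<Rightarrow> (nat \<Rightarrow> real) \<Rightarrow> (nat \<Rightarrow> real)" where
  "trunc k x = (\<lambda>j. if j \<le> k then x j else 0)"

definition robust_zero_chain ::
  "nat \<Rightarrow> real \<Rightarrow> real \<Rightarrow> ((nat \<Rightarrow> real) \<Rightarrow> real) \<Rightarrow> bool" where
  "robust_zero_chain d r R f \<longleftrightarrow>
     (\<forall>xbar \<in> Rd d. \<forall>x \<in> Bd d xbar r \<inter> Bd d (\<lambda>_. 0) R.
        f x = f (trunc (iplus d r xbar) x))"

definition fNr :: "nat \<Rightarrow> real \<Rightarrow> (nat \<Rightarrow> real) \<Rightarrow> real" where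
  "fNr N r x = Max ((\<lambda>i. x i - 4 * r * real i) ` {1..N})"

end

theory Submission
  imports Defs
begin

text \<open>If the centre of a ball of radius \<open>r\<close> has \<open>r\<close>-small coordinates from index \<open>k\<close> on,
  every point of the ball has \<open>2r\<close>-small coordinates there, so the terms \<open>x\<^sub>i - 4ri\<close> with
  \<open>i > k\<close>, of the point and of its truncation at \<open>k\<close>, are dominated by the \<open>k\<close>-th term and
  truncation does not change the maximum. For the gap, \<open>|x\<^sub>N| \<le> r\<close> gives
  \<open>f(x) \<ge> -r - 4Nr\<close>, while the point \<open>-(R/\<surd>N)(1,\<dots>,1,0,\<dots>,0)\<close> of the ball has value at
  most \<open>-R/\<surd>N - 4r\<close>. Convexity and the Lipschitz bound hold termwise.\<close>

lemma fNr_ge: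
  assumes "i \<in> {1..N}"
  shows "x i - 4 * r * real i \<le> fNr N r x"
  unfolding fNr_def using assms by (intro Max_ge) auto

lemma fNr_le_iff:
  assumes "N \<ge> 1"
  shows "fNr N r x \<le> c \<longleftrightarrow> (\<forall>i\<in>{1..N}. x i - 4 * r * real i \<le> c)"
  unfolding fNr_def using assms by (subst Max_le_iff) auto

lemma fNr_attained:
  assumes "N \<ge> 1"
  obtains i where "i \<in> {1..N}" "fNr N r x = x i - 4 * r * real i"
proof -
  have "fNr N r x \<in> (\<lambda>i. x i - 4 * r * real i) ` {1..N}"
    unfolding fNr_def using assms by (intro Max_in) auto
  then show ?thesis using that by auto
qed

lemma abs_coord_le_enorm:
  assumes "i \<in> {1..d}"
  shows "\<bar>x i\<bar> \<le> enorm d x"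
proof -
  have "(x i)\<^sup>2 \<le> (\<Sum>i=1..d. (x i)\<^sup>2)"
    using assms by (intro member_le_sum) auto
  then have "sqrt ((x i)\<^sup>2) \<le> enorm d x"
    unfolding enorm_def by (rule real_sqrt_le_mono)
  then show ?thesis by simp
qed

lemma enorm_diff_commute: "enorm d (\<lambda>i. x i - y i) = enorm d (\<lambda>i. y i - x i)"
  unfolding enorm_def by (simp add: power2_commute)

lemma enorm_indicator_const:
  assumes "N \<le> d"
  shows "enorm d (\<lambda>i. if i \<in> {1..N} then c else 0) = \<bar>c\<bar> * sqrt (real N)"
proof -
  have "(\<Sum>i=1..d. (if i \<in> {1..N} then c else 0)\<^sup>2) = (\<Sum>i\<in>{1..N}. c\<^sup>2)"
    using assms by (intro sum.mono_neutral_cong_right) auto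
  then show ?thesis
    unfolding enorm_def by (simp add: real_sqrt_mult)
qed

lemma fNr_convex:
  assumes "N \<ge> 1" and "0 \<le> t" "t \<le> 1"
  shows "fNr N r (\<lambda>i. (1 - t) * x i + t * y i) \<le> (1 - t) * fNr N r x + t * fNr N r y"
  unfolding fNr_le_iff[OF assms(1)]
proof
  fix i assume i: "i \<in> {1..N}"
  have "(1 - t) * (x i - 4 * r * real i) \<le> (1 - t) * fNr N r x"
    using assms fNr_ge[OF i] by (intro mult_left_mono) auto
  moreover have "t * (y i - 4 * r * real i) \<le> t * fNr N r y"
    using assms fNr_ge[OF i] by (intro mult_left_mono) auto
  ultimately show "(1 - t) * x i + t * y i - 4 * r * real i \<le> (1 - t) * fNr N r x + t * fNr N r y"
    by (simp add: algebra_simps)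
qed

lemma fNr_le_add_enorm:
  assumes "1 \<le> N" "N \<le> d"
  shows "fNr N r x \<le> fNr N r y + enorm d (\<lambda>i. x i - y i)"
proof -
  obtain i where i: "i \<in> {1..N}" "fNr N r x = x i - 4 * r * real i"
    using fNr_attained assms(1) by blast
  have "\<bar>x i - y i\<bar> \<le> enorm d (\<lambda>i. x i - y i)"
    using abs_coord_le_enorm[of i d "\<lambda>i. x i - y i"] i assms by auto
  moreover have "y i - 4 * r * real i \<le> fNr N r y"
    using fNr_ge i by blast
  ultimately show ?thesis using i by linarith
qed

lemma fNr_lipschitz:
  assumes "1 \<le> N" "N \<le> d"
  shows "\<bar>fNr N r x - fNr N r y\<bar> \<le> enorm d (\<lambda>i. x i - y i)"
  using fNr_le_add_enorm[OF assms, of r x y] fNr_le_add_enorm[OF assms, of r y x]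
  by (auto simp: enorm_diff_commute[of d y x])

lemma iplus_bounds:
  "iplus d r x \<in> {1..d+1}" "\<forall>j\<in>{iplus d r x..d}. \<bar>x j\<bar> \<le> r"
proof -
  have "iplus d r x \<in> {1..d+1} \<and> (\<forall>j\<in>{iplus d r x..d}. \<bar>x j\<bar> \<le> r)"
    unfolding iplus_def by (rule LeastI[of _ "d+1"]) auto
  then show "iplus d r x \<in> {1..d+1}" "\<forall>j\<in>{iplus d r x..d}. \<bar>x j\<bar> \<le> r"
    by blast+
qed

lemma abs_coord_le_beyond_iplus:
  assumes "x \<in> Bd d xb r" "j \<in> {iplus d r xb..d}"
  shows "\<bar>x j\<bar> \<le> 2 * r"
proof -
  have "\<bar>x j - xb j\<bar> \<le> r"
    using abs_coord_le_enorm[of j d "\<lambda>i. x i - xb i"] assms iplus_bounds(1)[of d r xb]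
    unfolding Bd_def by auto
  moreover have "\<bar>xb j\<bar> \<le> r"
    using iplus_bounds(2) assms(2) by blast
  ultimately show ?thesis by linarith
qed

text \<open>The gap \<open>4r\<close> between consecutive offsets \<open>4ri\<close> covers the spread \<open>4r\<close> of two
  \<open>2r\<close>-small coordinates.\<close>
lemma fNr_trunc_eq:
  assumes "r > 0" "1 \<le> k" "\<forall>j\<in>{k..N}. \<bar>x j\<bar> \<le> 2 * r"
  shows "fNr N r (trunc k x) = fNr N r x"
proof (cases "N \<le> k")
  case True
  then have "(\<lambda>i. trunc k x i - 4 * r * real i) ` {1..N} = (\<lambda>i. x i - 4 * r * real i) ` {1..N}"
    by (intro image_cong) (auto simp: trunc_def)
  then show ?thesis unfolding fNr_def by simp
next
  case False
  then have k: "k \<in> {1..N}" and N: "1 \<le> N"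
    using assms(2) by auto
  have kth_term: "x k - 4 * r * real k \<le> fNr N r y" if "y k = x k" for y
    using fNr_ge[OF k, of y r] that by simp
  have xk: "- 2 * r \<le> x k"
    using assms(3) k by force
  have dominated: "v - 4 * r * real i \<le> x k - 4 * r * real k"
    if "k < i" "i \<le> N" "\<bar>v\<bar> \<le> 2 * r" for i v
  proof -
    have "r * (real k + 1) \<le> r * real i"
      using that assms(1) by (intro mult_left_mono) auto
    then show ?thesis using that xk by (simp add: algebra_simps)
  qed
  have "fNr N r (trunc k x) \<le> fNr N r x"
    unfolding fNr_le_iff[OF N]
  proof
    fix i assume "i \<in> {1..N}"
    then show "trunc k x i - 4 * r * real i \<le> fNr N r x"
      using fNr_ge[of i N x r] dominated[of i 0] kth_term[of x] assms(1)
      by (cases "i \<le> k") (auto simp: trunc_def)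
  qed
  moreover have "fNr N r x \<le> fNr N r (trunc k x)"
    unfolding fNr_le_iff[OF N]
  proof
    fix i assume "i \<in> {1..N}"
    then show "x i - 4 * r * real i \<le> fNr N r (trunc k x)"
      using fNr_ge[of i N "trunc k x" r] dominated[of i "x i"] kth_term[of "trunc k x"] assms(3)
      by (cases "i \<le> k") (auto simp: trunc_def)
  qed
  ultimately show ?thesis by simp
qed

lemma fNr_robust_zero_chain:
  assumes "r > 0" "N \<le> d"
  shows "robust_zero_chain d r R (fNr N r)"
  unfolding robust_zero_chain_def
proof (intro ballI)
  fix xb x assume "x \<in> Bd d xb r \<inter> Bd d (\<lambda>_. 0) R"
  then have "\<forall>j\<in>{iplus d r xb..N}. \<bar>x j\<bar> \<le> 2 * r"
    using abs_coord_le_beyond_iplus assms(2) by fastforce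
  then show "fNr N r x = fNr N r (trunc (iplus d r xb) x)"
    using fNr_trunc_eq[OF assms(1)] iplus_bounds(1)[of d r xb] by fastforce
qed

lemma fNr_ge_of_abs_last_le:
  assumes "1 \<le> N" "\<bar>x N\<bar> \<le> r"
  shows "- r - 4 * r * real N \<le> fNr N r x"
  using fNr_ge[of N N x r] assms by auto

lemma fNr_ball_bdd_below:
  assumes "1 \<le> N" "1 \<le> d"
  shows "bdd_below (fNr N r ` Bd d (\<lambda>_. 0) R)"
proof (rule bdd_belowI2)
  fix w assume "w \<in> Bd d (\<lambda>_. 0) R"
  then have "\<bar>w 1\<bar> \<le> R"
    using abs_coord_le_enorm[of 1 d w] assms unfolding Bd_def by auto
  moreover have "w 1 - 4 * r \<le> fNr N r w"
    using fNr_ge[of 1 N w r] assms by auto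
  ultimately show "- R - 4 * r \<le> fNr N r w" by linarith
qed

lemma INF_fNr_ball_le:
  assumes "0 \<le> r" "0 \<le> R" "1 \<le> N" "N \<le> d"
  shows "(INF z \<in> Bd d (\<lambda>_. 0) R. fNr N r z) \<le> - R / sqrt (real N) - 4 * r"
proof -
  define z where "z = (\<lambda>i. if i \<in> {1..N} then - R / sqrt (real N) else 0)"
  have "enorm d z = R"
    using enorm_indicator_const[OF assms(4), of "- R / sqrt (real N)"] assms
    unfolding z_def by simp
  then have z: "z \<in> Bd d (\<lambda>_. 0) R"
    unfolding Bd_def Rd_def z_def using assms by auto
  have "fNr N r z \<le> - R / sqrt (real N) - 4 * r"
    unfolding fNr_le_iff[OF assms(3)]
  proof
    fix i assume i: "i \<in> {1..N}"
    have "r * 1 \<le> r * real i"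
      using i assms(1) by (intro mult_left_mono) auto
    then show "z i - 4 * r * real i \<le> - R / sqrt (real N) - 4 * r"
      using i by (simp add: z_def)
  qed
  moreover have "(INF z \<in> Bd d (\<lambda>_. 0) R. fNr N r z) \<le> fNr N r z"
    using fNr_ball_bdd_below[of N d r R] assms z by (intro cINF_lower) auto
  ultimately show ?thesis by linarith
qed

theorem lemma14:
  fixes r R :: real and N d :: nat
  assumes "r > 0" and "R > 0" and "N \<ge> 1" and "d \<ge> N"
  shows "robust_zero_chain d r R (fNr N r)
    \<and> (\<forall>x \<in> Bd d (\<lambda>_. 0) R. iplus d r x \<le> N \<longrightarrow>
          fNr N r x - (INF z \<in> Bd d (\<lambda>_. 0) R. fNr N r z) \<ge> R / sqrt (real N) - 4 * real N * r)
    \<and> (\<forall>x \<in> Bd d (\<lambda>_. 0) R. \<forall>y \<in> Bd d (\<lambda>_. 0) R. \<forall>t::real. 0 \<le> t \<and> t \<le> 1 \<longrightarrow>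
          fNr N r (\<lambda>i. (1 - t) * x i + t * y i) \<le> (1 - t) * fNr N r x + t * fNr N r y)
    \<and> (\<forall>x \<in> Bd d (\<lambda>_. 0) R. \<forall>y \<in> Bd d (\<lambda>_. 0) R.
          \<bar>fNr N r x - fNr N r y\<bar> \<le> enorm d (\<lambda>i. x i - y i))"
proof (intro conjI ballI allI impI)
  show "robust_zero_chain d r R (fNr N r)"
    using fNr_robust_zero_chain assms by blast
next
  fix x assume "iplus d r x \<le> N"
  then have "- r - 4 * r * real N \<le> fNr N r x"
    using fNr_ge_of_abs_last_le[OF assms(3)] iplus_bounds(2)[of d r x] assms(4) by auto
  then show "fNr N r x - (INF z \<in> Bd d (\<lambda>_. 0) R. fNr N r z) \<ge> R / sqrt (real N) - 4 * real N * r"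
    using INF_fNr_ball_le[of r R N d] assms by (simp add: algebra_simps)
next
  fix x y and t :: real assume "0 \<le> t \<and> t \<le> 1"
  then show "fNr N r (\<lambda>i. (1 - t) * x i + t * y i) \<le> (1 - t) * fNr N r x + t * fNr N r y"
    using fNr_convex assms(3) by blast
next
  fix x y
  show "\<bar>fNr N r x - fNr N r y\<bar> \<le> enorm d (\<lambda>i. x i - y i)"
    using fNr_lipschitz assms(3,4) by blast
qed

end
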